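(* Consider the following two-bidder auction with limit price $L=0$. A single good has common value $v$ with CDF $F_v$, density $f_v$, support $\mathbb{R}_+$ and finite mean. Alice submits a bid knowing only $F_v$; then $v$ is realized and Bob, observing $v$ but not Alice's bid, submits a bid; the highest bid wins and pays its bid, receiving $v$ minus the bid; Bob wins ties. Let $\Pi_B$ be Bob's expected profit in the equilibrium in which Bob bids $\mathbb{E}[\tilde v\mid\tilde v<v]$ and Alice draws $v'\sim F_v$ independently and bids $\mathbb{E}[\tilde v\mid\tilde v<v']$. Then, with $v\sim F_v$, $$\Pi_B\ge \mathbb{E}[\max(v-\mathbb{E}[v],0)]\quad\text{and}\quad \Pi_B\ge \mathbb{E}[\max(\mathbb{E}[v]-v,0)].$$
   Context: Bidders are risk neutral; $\tilde v\sim F_v$. *)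

theory Defs
  imports "HOL-Probability.Probability"
begin

definition real_support :: "real measure \<Rightarrow> real set" where
  "real_support M = {x. \<forall>e>0. measure M (ball x e) > 0}"

text \<open>Conditional expectation E[v | v < w] under the distribution M
  (value 0 if the conditioning event has probability 0, which happens only
  on a null set of w when the support is the nonnegative reals).\<close>
definition cond_exp_below :: "real measure \<Rightarrow> real \<Rightarrow> real" where
  "cond_exp_below M w =
     (\<integral>x. x * indicator {..<w} x \<partial>M) / measure M {..<w}"

text \<open>Bob's expected profit in the equilibrium: Bob (value v) bids
  b v = E[v~ | v~ < v]; Alice draws v' independently from the same
  distribution and bids b v'; Bob wins ties and pays his bid.\<close>
definition bob_profit :: "real measure \<Rightarrow> real" where
  "bob_profit M =
     (\<integral>p. (if cond_exp_below M (snd p) \<le> cond_exp_below M (fst p)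
            then fst p - cond_exp_below M (fst p) else 0) \<partial>(M \<Otimes>\<^sub>M M))"

end

(* Write b w = E[v | v < w] and F w = P(v < w). Cross-multiplying shows that b is nondecreasing
   wherever F is positive, so Bob with value x outbids almost every draw of Alice below x, and
   Pi_B >= E[(v - b v) F v]. The gap (x - b x) F x equals E[(x - v') 1{v' < x}], which dominates
   both 0 and E[x - v'] = x - E v; integrating gives the first bound. The second bound is the same
   number, since E[max(E v - v, 0)] - E[max(v - E v, 0)] = E[E v - v] = 0. *)

theory Submission
  imports Defs
begin

lemma (in prob_space) AE_pair_measure_fst:
  assumes "AE x in N. P x"
  shows "AE p in N \<Otimes>\<^sub>M M. P (fst p)"
proof -
  from assms have "AE x in distr (N \<Otimes>\<^sub>M M) N fst. P x"
    unfolding distr_pair_fst .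
  then show ?thesis
    by (rule AE_distrD[OF measurable_fst])
qed

lemma (in prob_space) integrable_pair_measure_fst:
  fixes f :: "'b \<Rightarrow> real"
  assumes "integrable N f"
  shows "integrable (N \<Otimes>\<^sub>M M) (\<lambda>p. f (fst p))"
proof -
  have "f \<in> borel_measurable N"
    using assms by auto
  then show ?thesis
    using assms integrable_distr_eq[OF measurable_fst, of f N M] by (simp add: distr_pair_fst)
qed

context real_distribution
begin

lemma AE_in_real_support: "AE x in M. x \<in> real_support M"
proof -
  define \<B> where "\<B> = {ball x e | x e. 0 < e \<and> prob (ball x e) = 0}"
  obtain \<C> where \<C>: "\<C> \<subseteq> \<B>" "countable \<C>" "\<Union>\<C> = \<Union>\<B>"
    using Lindelof[of \<B>] by (auto simp: \<B>_def)
  have "(\<Union>B\<in>\<C>. B) \<in> null_sets M"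
    using \<C>(1) by (intro null_sets_UN' \<C>(2)) (auto simp: \<B>_def null_sets_def emeasure_eq_measure)
  moreover have "- real_support M \<subseteq> \<Union>\<B>"
  proof
    fix x assume "x \<in> - real_support M"
    then obtain e where "0 < e" "prob (ball x e) \<le> 0"
      by (auto simp: real_support_def not_less)
    then show "x \<in> \<Union>\<B>"
      unfolding \<B>_def using measure_nonneg[of M "ball x e"] by force
  qed
  ultimately show ?thesis
    using \<C>(3) by (intro AE_I'[of "\<Union>\<C>"]) auto
qed

lemma prob_lessThan_pos:
  assumes "x \<in> real_support M" "x < w"
  shows "0 < prob {..<w}"
proof -
  have "0 < prob (ball x (w - x))"
    using assms by (auto simp: real_support_def)
  also have "\<dots> \<le> prob {..<w}"
    by (intro finite_measure_mono) (auto simp: ball_def dist_real_def)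
  finally show ?thesis .
qed

end

locale integrable_real_distribution = real_distribution +
  assumes integrable_id [simp]: "integrable M (\<lambda>x. x)"
begin

lemma integrable_id_indicator [simp]: "integrable M (\<lambda>x. x * indicator A x)" if "A \<in> sets borel"
  using that by (intro integrable_real_mult_indicator) auto

lemma integrable_indicator_borel [simp]: "integrable M (indicator A :: real \<Rightarrow> real)" if "A \<in> sets borel"
  using that by (intro integrable_real_indicator) (auto simp: emeasure_eq_measure)

lemma integral_lessThan_le: "(\<integral>x. x * indicator {..<w} x \<partial>M) \<le> w * prob {..<w}"
proof -
  have "(\<integral>x. x * indicator {..<w} x \<partial>M) \<le> (\<integral>x. w * indicator {..<w} x \<partial>M)"
    by (intro integral_mono) (auto split: split_indicator)
  then show ?thesis by simp
qed

lemma integral_lessThan_diff_ge: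
  assumes "w\<^sub>1 \<le> w\<^sub>2"
  shows "w\<^sub>1 * (prob {..<w\<^sub>2} - prob {..<w\<^sub>1}) \<le>
    (\<integral>x. x * indicator {..<w\<^sub>2} x \<partial>M) - (\<integral>x. x * indicator {..<w\<^sub>1} x \<partial>M)"
proof -
  have "w\<^sub>1 * (prob {..<w\<^sub>2} - prob {..<w\<^sub>1}) =
      (\<integral>x. w\<^sub>1 * indicator {..<w\<^sub>2} x - w\<^sub>1 * indicator {..<w\<^sub>1} x \<partial>M)"
    by (simp add: algebra_simps)
  also have "\<dots> \<le> (\<integral>x. x * indicator {..<w\<^sub>2} x - x * indicator {..<w\<^sub>1} x \<partial>M)"
    using assms by (intro integral_mono) (auto split: split_indicator)
  also have "\<dots> = (\<integral>x. x * indicator {..<w\<^sub>2} x \<partial>M) - (\<integral>x. x * indicator {..<w\<^sub>1} x \<partial>M)"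
    by simp
  finally show ?thesis .
qed

lemma cond_exp_below_le: "0 < prob {..<w} \<Longrightarrow> cond_exp_below M w \<le> w"
  using integral_lessThan_le[of w] by (simp add: cond_exp_below_def divide_le_eq)

lemma cond_exp_below_nonneg: "AE x in M. 0 \<le> x \<Longrightarrow> 0 \<le> cond_exp_below M w"
  unfolding cond_exp_below_def
  by (intro divide_nonneg_nonneg integral_nonneg_AE) (auto split: split_indicator elim: eventually_mono)

lemma cond_exp_below_mono:
  assumes pos: "0 < prob {..<w\<^sub>1}" and le: "w\<^sub>1 \<le> w\<^sub>2"
  shows "cond_exp_below M w\<^sub>1 \<le> cond_exp_below M w\<^sub>2"
proof -
  define F where "F w = prob {..<w}" for w
  define I where "I w = (\<integral>x. x * indicator {..<w} x \<partial>M)" for w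
  have "F w\<^sub>1 \<le> F w\<^sub>2"
    unfolding F_def using le by (intro finite_measure_mono) auto
  then have "0 \<le> (w\<^sub>1 * F w\<^sub>1 - I w\<^sub>1) * (F w\<^sub>2 - F w\<^sub>1)"
    using integral_lessThan_le[of w\<^sub>1] by (simp add: F_def I_def)
  moreover have "F w\<^sub>1 * (w\<^sub>1 * (F w\<^sub>2 - F w\<^sub>1)) \<le> F w\<^sub>1 * (I w\<^sub>2 - I w\<^sub>1)"
    using integral_lessThan_diff_ge[OF le] pos by (simp add: F_def I_def)
  ultimately have "I w\<^sub>1 * F w\<^sub>2 \<le> I w\<^sub>2 * F w\<^sub>1"
    by (simp add: algebra_simps)
  moreover have "0 < F w\<^sub>1" "0 < F w\<^sub>2"
    using pos \<open>F w\<^sub>1 \<le> F w\<^sub>2\<close> by (auto simp: F_def)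
  ultimately show ?thesis
    by (simp add: cond_exp_below_def F_def[symmetric] I_def[symmetric] divide_simps)
qed

lemma borel_measurable_prob_lessThan [measurable]: "(\<lambda>w. prob {..<w}) \<in> borel_measurable borel"
  by (intro borel_measurable_mono monoI finite_measure_mono) auto

lemma borel_measurable_cond_exp_below [measurable]: "cond_exp_below M \<in> borel_measurable borel"
proof -
  have "(\<lambda>w. \<integral>x. (if x < w then x else 0) \<partial>M) \<in> borel_measurable borel"
    by measurable
  moreover have "(\<lambda>w. \<integral>x. (if x < w then x else 0) \<partial>M) = (\<lambda>w. \<integral>x. x * indicator {..<w} x \<partial>M)"
    by (intro ext Bochner_Integration.integral_cong) (auto split: split_indicator)
  ultimately have [measurable]: "(\<lambda>w. \<integral>x. x * indicator {..<w} x \<partial>M) \<in> borel_measurable borel"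
    by simp
  show ?thesis
    unfolding cond_exp_below_def[abs_def] by measurable
qed

lemma cond_exp_below_gap:
  assumes "0 < prob {..<w}"
  shows "(w - cond_exp_below M w) * prob {..<w} = (\<integral>y. (w - y) * indicator {..<w} y \<partial>M)"
proof -
  have "(\<integral>y. (w - y) * indicator {..<w} y \<partial>M) =
      (\<integral>y. w * indicator {..<w} y - y * indicator {..<w} y \<partial>M)"
    by (simp add: left_diff_distrib)
  also have "\<dots> = w * prob {..<w} - (\<integral>y. y * indicator {..<w} y \<partial>M)"
    by simp
  finally show ?thesis
    using assms by (simp add: cond_exp_below_def left_diff_distrib)
qed

lemma pos_part_le_integral_gap:
  "max (w - expectation (\<lambda>x. x)) 0 \<le> (\<integral>y. (w - y) * indicator {..<w} y \<partial>M)"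
proof -
  have gap_integrable: "integrable M (\<lambda>y. (w - y) * indicator {..<w} y)"
    by (simp add: left_diff_distrib)
  have "w - expectation (\<lambda>x. x) = (\<integral>y. w - y \<partial>M)"
    by (simp add: prob_space[unfolded space_eq_univ])
  also have "\<dots> \<le> (\<integral>y. (w - y) * indicator {..<w} y \<partial>M)"
    using gap_integrable by (intro integral_mono) (auto split: split_indicator)
  finally show ?thesis
    by (auto intro: integral_nonneg split: split_indicator)
qed

lemma integral_neg_part_eq_pos_part:
  "(\<integral>v. max (expectation (\<lambda>x. x) - v) 0 \<partial>M) = (\<integral>v. max (v - expectation (\<lambda>x. x)) 0 \<partial>M)"
proof -
  let ?\<mu> = "expectation (\<lambda>x. x)"
  have "(\<integral>v. max (?\<mu> - v) 0 \<partial>M) = (\<integral>v. max (v - ?\<mu>) 0 - (v - ?\<mu>) \<partial>M)"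
    by (intro Bochner_Integration.integral_cong) auto
  also have "\<dots> = (\<integral>v. max (v - ?\<mu>) 0 \<partial>M) - (\<integral>v. v - ?\<mu> \<partial>M)"
    by (intro Bochner_Integration.integral_diff Bochner_Integration.integrable_max) auto
  also have "(\<integral>v. v - ?\<mu> \<partial>M) = 0"
    by (simp add: prob_space[unfolded space_eq_univ])
  finally show ?thesis by simp
qed

(* Positive mass below almost every value excludes an atom at the bottom of the support, where
   cond_exp_below M x would be the junk value 0 / 0 = 0. *)
lemma AE_cond_exp_below_bounds:
  assumes nonneg: "AE x in M. 0 \<le> x" and lower_pos: "AE x in M. 0 < prob {..<x}"
  shows "AE x in M. 0 \<le> cond_exp_below M x \<and> cond_exp_below M x \<le> x"
  using lower_pos by eventually_elim (auto intro: cond_exp_below_le cond_exp_below_nonneg[OF nonneg])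

lemma integrable_cond_exp_below_gap:
  assumes "AE x in M. 0 \<le> x" and "AE x in M. 0 < prob {..<x}"
  shows "integrable M (\<lambda>x. (x - cond_exp_below M x) * prob {..<x})"
proof (rule Bochner_Integration.integrable_bound[OF integrable_id])
  show "AE x in M. norm ((x - cond_exp_below M x) * prob {..<x}) \<le> norm x"
    using AE_cond_exp_below_bounds[OF assms]
  proof eventually_elim
    case (elim x)
    then have "(x - cond_exp_below M x) * prob {..<x} \<le> x * 1"
      by (intro mult_mono) auto
    then show ?case
      using elim by simp
  qed
qed simp

lemma bob_profit_ge_expected_gap:
  assumes "AE x in M. 0 \<le> x" and lower_pos: "AE x in M. 0 < prob {..<x}"
  shows "(\<integral>x. (x - cond_exp_below M x) * prob {..<x} \<partial>M) \<le> bob_profit M"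
proof -
  let ?b = "cond_exp_below M"
  define h where "h p = (if ?b (snd p) \<le> ?b (fst p) then fst p - ?b (fst p) else 0)" for p
  note bounds = AE_cond_exp_below_bounds[OF assms]
  have h_integrable: "integrable (M \<Otimes>\<^sub>M M) h"
  proof (rule Bochner_Integration.integrable_bound)
    show "integrable (M \<Otimes>\<^sub>M M) (\<lambda>p. fst p)"
      using integrable_pair_measure_fst[OF integrable_id] by simp
    show "AE p in M \<Otimes>\<^sub>M M. norm (h p) \<le> norm (fst p)"
      using AE_pair_measure_fst[OF bounds] by eventually_elim (auto simp: h_def)
  qed (simp add: h_def[abs_def])
  interpret product: pair_prob_space M M ..
  have inner: "(\<integral>y. h (x, y) \<partial>M) = (x - ?b x) * prob {y. ?b y \<le> ?b x}" for x
  proof -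
    have "(\<integral>y. h (x, y) \<partial>M) = (\<integral>y. (x - ?b x) * indicator {y. ?b y \<le> ?b x} y \<partial>M)"
      by (intro Bochner_Integration.integral_cong) (auto simp: h_def split: split_indicator)
    then show ?thesis by simp
  qed
  have "bob_profit M = (\<integral>p. h p \<partial>(M \<Otimes>\<^sub>M M))"
    by (simp add: bob_profit_def h_def[abs_def])
  then have win: "bob_profit M = (\<integral>x. (x - ?b x) * prob {y. ?b y \<le> ?b x} \<partial>M)"
    and win_integrable: "integrable M (\<lambda>x. (x - ?b x) * prob {y. ?b y \<le> ?b x})"
    using product.integral_fst'[OF h_integrable] product.integrable_fst'[OF h_integrable]
    by (simp_all add: inner)
  have "AE x in M. (x - ?b x) * prob {..<x} \<le> (x - ?b x) * prob {y. ?b y \<le> ?b x}"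
    using bounds
  proof eventually_elim
    case (elim x)
    have "AE y in M. y \<in> {..<x} \<longrightarrow> y \<in> {y. ?b y \<le> ?b x}"
      using lower_pos by eventually_elim (auto intro: cond_exp_below_mono)
    then have "prob {..<x} \<le> prob {y. ?b y \<le> ?b x}"
      by (rule finite_measure_mono_AE) simp
    then show ?case
      using elim by (intro mult_left_mono) auto
  qed
  moreover have "AE x in M. 0 \<le> (x - ?b x) * prob {y. ?b y \<le> ?b x}"
    using bounds by eventually_elim simp
  ultimately show ?thesis
    unfolding win by (rule integral_mono_AE'[OF win_integrable])
qed

lemma expected_pos_part_le_bob_profit:
  assumes "AE x in M. 0 \<le> x" and lower_pos: "AE x in M. 0 < prob {..<x}"
  shows "(\<integral>v. max (v - expectation (\<lambda>x. x)) 0 \<partial>M) \<le> bob_profit M"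
proof -
  have "AE v in M. max (v - expectation (\<lambda>x. x)) 0 \<le> (v - cond_exp_below M v) * prob {..<v}"
    using lower_pos by eventually_elim (simp only: cond_exp_below_gap pos_part_le_integral_gap)
  then have "(\<integral>v. max (v - expectation (\<lambda>x. x)) 0 \<partial>M) \<le>
      (\<integral>v. (v - cond_exp_below M v) * prob {..<v} \<partial>M)"
    by (intro integral_mono_AE integrable_cond_exp_below_gap[OF assms])
      (auto intro: Bochner_Integration.integrable_max)
  also have "\<dots> \<le> bob_profit M"
    by (rule bob_profit_ge_expected_gap[OF assms])
  finally show ?thesis .
qed

end

theorem corollary2:
  fixes f :: "real \<Rightarrow> real"
  defines "M \<equiv> density lborel f"
  assumes f_meas: "f \<in> borel_measurable borel"
    and f_nonneg: "\<And>x. f x \<ge> 0"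
    and prob: "prob_space M"
    and supp: "real_support M = {0..}"
    and mean: "integrable M (\<lambda>x. x)"
  shows "bob_profit M \<ge> (\<integral>v. max (v - (\<integral>x. x \<partial>M)) 0 \<partial>M) \<and>
         bob_profit M \<ge> (\<integral>v. max ((\<integral>x. x \<partial>M) - v) 0 \<partial>M)"
proof -
  interpret integrable_real_distribution M
    using prob mean unfolding integrable_real_distribution_def integrable_real_distribution_axioms_def
      real_distribution_def real_distribution_axioms_def by (simp add: M_def)
  have "AE x in M. x \<noteq> 0"
    using AE_lborel_singleton[of "0::real"] f_meas unfolding M_def by (subst AE_density) auto
  then have pos: "AE x in M. 0 < x"
    using AE_in_real_support by eventually_elim (auto simp: supp)
  then have "AE x in M. 0 < prob {..<x}"
    by eventually_elim (rule prob_lessThan_pos[of 0], simp_all add: supp)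
  moreover have "AE x in M. 0 \<le> x"
    using pos by eventually_elim simp
  ultimately show ?thesis
    using expected_pos_part_le_bob_profit integral_neg_part_eq_pos_part by simp
qed

end
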